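(* Let $k\ge 1$, $n=2^{k+1}$, and run Jakobsson's pebble-update procedure (with its $k+1$ pebbles) for $n/2=2^k$ steps. Then for every initial label $j$ with $1\le j<k$, the pebble with initial label $j$ makes exactly $2^{k-j-1}$ backward moves during these $2^k$ steps.
   Context: Jakobsson's pebble-update procedure (hash-chain preimage traversal). Fix $K\ge 1$ and $N=2^K$ (in the claim, $N=n$ and $K=k+1$). There are $K$ pebbles, identified by their initial label $j\in\{1,\dots,K\}$. Pebble $j$ has two fixed constants $S_j=3\cdot 2^j$ (start increment) and $D_j=2^{j+1}$ (destination increment), and two integer fields $\mathrm{Position}$ and $\mathrm{Destination}$ (which may be set to $+\infty$). Initially $\mathrm{Position}=\mathrm{Destination}=2^j$ for pebble $j$, and a counter $c$ equals $0$. The pebbles are kept sorted by $\mathrm{Position}$, and "the first pebble" means the pebble with the smallest $\mathrm{Position}$. One step: (i) if $c=N$, stop; otherwise $c\leftarrow c+1$; (ii) for every pebble with $\mathrm{Position}\ne\mathrm{Destination}$, set $\mathrm{Position}\leftarrow\mathrm{Position}-2$; (iii) if $c$ is even, the first pebble (say with initial label $j$) makes a backward move: $\mathrm{Position}\leftarrow \mathrm{Position}+S_j$, $\mathrm{Destination}\leftarrow\mathrm{Destination}+D_j$; if the new Destination exceeds $N$, both fields are set to $+\infty$ and the pebble is said to be discarded; then the pebbles are re-sorted by $\mathrm{Position}$. (Each pebble also stores a hash-chain value, which does not influence the evolution of the Position and Destination fields.) *)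

theory Defs
  imports Main "HOL-Library.Product_Lexorder"
begin

text \<open>Extended integers: None represents +infinity.\<close>
type_synonym eint = "int option"

text \<open>A pebble: (initial label j, Position, Destination).\<close>
type_synonym pebble = "nat \<times> eint \<times> eint"

text \<open>State: (counter c, pebbles in sorted order, number of backward moves per label).\<close>
type_synonym pstate = "nat \<times> pebble list \<times> (nat \<Rightarrow> nat)"

definition pos_key :: "pebble \<Rightarrow> bool \<times> int" where
  "pos_key p = (case fst (snd p) of None \<Rightarrow> (True, 0) | Some x \<Rightarrow> (False, x))"

definition advance :: "pebble \<Rightarrow> pebble" where
  "advance p = (case p of (j, pos, dest) \<Rightarrow>
     if pos \<noteq> dest then (j, map_option (\<lambda>x. x - 2) pos, dest) else p)"

definition backmove :: "nat \<Rightarrow> pebble \<Rightarrow> pebble" where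
  "backmove N p = (case p of (j, pos, dest) \<Rightarrow>
     (let pos' = map_option (\<lambda>x. x + 3 * 2 ^ j) pos;
          dest' = map_option (\<lambda>x. x + 2 ^ (j + 1)) dest
      in if (case dest' of None \<Rightarrow> True | Some d \<Rightarrow> d > int N)
         then (j, None, None) else (j, pos', dest')))"

definition pstep :: "nat \<Rightarrow> pstate \<Rightarrow> pstate" where
  "pstep N s = (case s of (c, ps, mv) \<Rightarrow>
     if c = N then s else
     (let c' = c + 1; ps1 = map advance ps in
      if even c' then
        (case ps1 of [] \<Rightarrow> (c', ps1, mv)
         | p # rest \<Rightarrow> (c', sort_key pos_key (backmove N p # rest),
                         mv(fst p := mv (fst p) + 1)))
      else (c', ps1, mv)))"

definition pinit :: "nat \<Rightarrow> pstate" where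
  "pinit K = (0, [(j, Some (2 ^ j), Some (2 ^ j)). j \<leftarrow> [1..<K + 1]], (\<lambda>_. 0))"

definition backward_moves :: "nat \<Rightarrow> nat \<Rightarrow> nat \<Rightarrow> nat" where
  "backward_moves K t j = snd (snd ((pstep (2 ^ K) ^^ t) (pinit K))) j"

end

theory Submission imports Defs begin

(*
  With K = k + 1 pebbles the whole state of the procedure at every time
  c < 2^k has a closed form (the "canonical state").  Pebble j has made
  moves c j = (c + 2^j) div 2^(j+1) backward moves, its destination is
  dest c j = 2^j (2 moves c j + 1), and its position exceeds the destination by the
  distance still to be walked down since the last move (which put it 2^j above the new
  destination).  Destinations 2^j(2m+1) of different pebbles have different 2-adic
  valuations, so at every even step c + 1 exactly one pebble has destination c + 1;
  it has already arrived there, hence it is the first pebble, i.e. exactly the pebble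
  that the closed form predicts to move.
*)

section \<open>Factorisation into a power of two times an odd number\<close>

text \<open>The exponent of 2 in a factorisation 2^i * odd is unique; this separates the
  destinations of different pebbles.\<close>
lemma pow2_odd_exponent_unique:
  "(2::nat) ^ i * (2 * a + 1) = 2 ^ j * (2 * b + 1) \<Longrightarrow> i = j"
proof (induction i arbitrary: j)
  case 0
  then show ?case by (cases j) (auto, presburger)
next
  case (Suc i)
  then show ?case by (cases j) (auto, presburger)
qed

lemma pow2_odd_factorisation:
  "n > 0 \<Longrightarrow> \<exists>i b. n = (2::nat) ^ i * (2 * b + 1)"
proof (induction n rule: less_induct)
  case (less n)
  show ?case
  proof (cases "even n")
    case True
    then obtain h where h: "n = 2 * h" by blast
    with less.prems have "h < n" "h > 0" by auto
    with less.IH obtain i b where "h = 2 ^ i * (2 * b + 1)" by blast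
    with h have "n = 2 ^ Suc i * (2 * b + 1)" by simp
    then show ?thesis by blast
  next
    case False
    then obtain b where "n = 2 * b + 1" using oddE by blast
    then show ?thesis by (intro exI[of _ 0] exI[of _ b]) simp
  qed
qed

section \<open>The closed form of the state\<close>

text \<open>Number of backward moves of pebble j after c steps: it moves at the steps
  c = 2^j (2m + 1), m = 0, 1, ...\<close>
definition moves :: "nat \<Rightarrow> nat \<Rightarrow> nat" where
  "moves c j = (c + 2 ^ j) div 2 ^ (j + 1)"

text \<open>Destination of pebble j after c steps, i.e. the step of its next backward move.\<close>
definition dest :: "nat \<Rightarrow> nat \<Rightarrow> nat" where
  "dest c j = 2 ^ j * (2 * moves c j + 1)"

text \<open>Position of pebble j after c steps.  Its last move happened at step
  dest c j - 2^(j+1) and put it 2^j above its destination; since then it descends by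
  2 per step until it reaches the destination.\<close>
definition posn :: "nat \<Rightarrow> nat \<Rightarrow> int" where
  "posn c j = int (dest c j) + max 0 (2 ^ j - 2 * (int c + 2 ^ (j + 1) - int (dest c j)))"

definition pebble_at :: "nat \<Rightarrow> nat \<Rightarrow> pebble" where
  "pebble_at c j = (j, Some (posn c j), Some (int (dest c j)))"

lemma moves_bounds:
  "2 ^ (j + 1) * moves c j \<le> c + 2 ^ j" "c + 2 ^ j < 2 ^ (j + 1) * (moves c j + 1)"
  unfolding moves_def
  using div_times_less_eq_dividend[of "c + 2 ^ j" "2 ^ (j + 1)"]
    dividend_less_times_div[of "2 ^ (j + 1)" "c + 2 ^ j"]
  by (simp_all add: mult.commute)

lemma dest_eq: "dest c j = 2 ^ (j + 1) * moves c j + 2 ^ j"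
  unfolding dest_def by (simp add: algebra_simps)

lemma dest_gt: "c < dest c j"
  using moves_bounds(2)[of c j] unfolding dest_eq by (simp add: algebra_simps)

lemma dest_ge: "2 ^ j \<le> dest c j"
  unfolding dest_def by simp

text \<open>Destinations are even, so pebbles only ever move at even steps.\<close>
lemma dest_even: "j \<ge> 1 \<Longrightarrow> even (dest c j)"
  unfolding dest_def by (cases j) auto

lemma dest_inj: "dest c i = dest c j \<Longrightarrow> i = j"
  unfolding dest_def by (rule pow2_odd_exponent_unique)

lemma moves_Suc: "moves (c + 1) j = moves c j + (if dest c j = c + 1 then 1 else 0)"
proof -
  have lo: "2 ^ (j + 1) * moves c j \<le> c + 2 ^ j"
    and hi: "c + 2 ^ j < 2 ^ (j + 1) * (moves c j + 1)"
    using moves_bounds by auto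
  show ?thesis
  proof (cases "dest c j = c + 1")
    case True
    then have "c + 1 + 2 ^ j = 2 ^ (j + 1) * (moves c j + 1)"
      unfolding dest_eq by (simp add: algebra_simps)
    then show ?thesis using True unfolding moves_def by simp
  next
    case False
    then have "c + 1 + 2 ^ j < 2 ^ (j + 1) * (moves c j + 1)"
      using hi unfolding dest_eq by (simp add: algebra_simps)
    then have "(c + 1 + 2 ^ j) div 2 ^ (j + 1) = moves c j"
      using lo by (intro div_nat_eqI) (auto simp: mult.commute)
    then show ?thesis using False unfolding moves_def by simp
  qed
qed

lemma dest_Suc_stay: "dest c j \<noteq> c + 1 \<Longrightarrow> dest (c + 1) j = dest c j"
  using moves_Suc[of c j] by (simp add: dest_def)

lemma dest_Suc_move: "dest c j = c + 1 \<Longrightarrow> dest (c + 1) j = dest c j + 2 ^ (j + 1)"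
  using moves_Suc[of c j] by (simp add: dest_def algebra_simps)

lemma posn_ge_dest: "int (dest c j) \<le> posn c j"
  unfolding posn_def by simp

lemma posn_at_dest: "j \<ge> 1 \<Longrightarrow> dest c j \<le> c + 2 \<Longrightarrow> posn c j = int (dest c j)"
proof -
  assume j: "j \<ge> 1" and d: "dest c j \<le> c + 2"
  have "(2::int) ^ 1 \<le> 2 ^ j" using j by (intro power_increasing) auto
  then have "(2::int) ^ j - 2 * (int c + 2 ^ (j + 1) - int (dest c j)) < 0"
    using d by simp
  then show ?thesis unfolding posn_def by simp
qed

text \<open>Every even step d that is the next or the next-but-one step is the destination
  of some pebble: write d = 2^i (2b + 1) and take pebble i.\<close>
lemma dest_hits:
  assumes "even d" "d \<le> 2 ^ K" "d = c + 1 \<or> d = c + 2"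
  shows "\<exists>i \<in> {1..K}. dest c i = d"
proof -
  obtain i b where db: "d = 2 ^ i * (2 * b + 1)"
    using pow2_odd_factorisation[of d] assms(3) by auto
  have i1: "i \<ge> 1" using assms(1) db by (cases i) auto
  have "(2::nat) ^ i \<le> d" using db by simp
  then have "(2::nat) ^ i \<le> 2 ^ K" using assms(2) by linarith
  then have iK: "i \<le> K" by simp
  have "(2::nat) ^ 1 \<le> 2 ^ i" using i1 by (intro power_increasing) auto
  then have "moves c i = b" unfolding moves_def
    using db assms(3) by (intro div_nat_eqI) (auto simp: algebra_simps)
  then have "dest c i = d" unfolding dest_def db by simp
  with i1 iK show ?thesis by auto
qed

lemma moves_pow2: "j < k \<Longrightarrow> moves (2 ^ k) j = 2 ^ (k - j - 1)"
proof -
  assume "j < k"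
  then have "k = (j + 1) + (k - j - 1)" by simp
  then have k: "(2::nat) ^ k = 2 ^ (j + 1) * 2 ^ (k - j - 1)"
    by (metis power_add)
  have "(2::nat) ^ j < 2 ^ (j + 1)" by simp
  then show ?thesis unfolding moves_def k by simp
qed

section \<open>Single pebbles under the update rules\<close>

lemma pos_key_pebble_at [simp]: "pos_key (pebble_at c j) = (False, posn c j)"
  unfolding pos_key_def pebble_at_def by simp

lemma fst_pebble_at [simp]: "fst (pebble_at c j) = j"
  unfolding pebble_at_def by simp

lemma advance_pebble_at:
  assumes j: "j \<ge> 1" and d: "dest c j \<noteq> c + 1"
  shows "advance (pebble_at c j) = pebble_at (c + 1) j"
proof -
  have dd: "dest (c + 1) j = dest c j" using dest_Suc_stay[OF d] .
  define e where "e = (2::int) ^ j - 2 * (int c + 2 ^ (j + 1) - int (dest c j))"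
  have "even e" unfolding e_def using j by (cases j) auto
  then have e: "e > 0 \<Longrightarrow> e \<ge> 2" by presburger
  have p0: "posn c j = int (dest c j) + max 0 e" unfolding posn_def e_def by simp
  have p1: "posn (c + 1) j = int (dest c j) + max 0 (e - 2)"
    unfolding posn_def e_def dd by (simp add: algebra_simps)
  show ?thesis unfolding advance_def pebble_at_def using p0 p1 dd e by auto
qed

lemma backmove_pebble_at:
  assumes j: "j \<ge> 1" and d: "dest c j = c + 1" and N: "c + 1 + 2 ^ (j + 1) \<le> N"
  shows "backmove N (advance (pebble_at c j)) = pebble_at (c + 1) j"
proof -
  have p: "posn c j = int (c + 1)" using posn_at_dest[OF j] d by simp
  have a: "advance (pebble_at c j) = pebble_at c j"
    unfolding advance_def pebble_at_def p d by simp
  have dd: "dest (c + 1) j = c + 1 + 2 ^ (j + 1)" using dest_Suc_move[OF d] d by simp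
  have p1: "posn (c + 1) j = int (c + 1 + 3 * 2 ^ j)" unfolding posn_def dd by simp
  have "\<not> int N < int (c + 1 + 2 ^ (j + 1))" using N by linarith
  then show ?thesis unfolding a unfolding backmove_def pebble_at_def p d p1 dd Let_def
    by (simp add: algebra_simps)
qed

section \<open>The canonical state and its invariance\<close>

definition moves_fun :: "nat \<Rightarrow> nat \<Rightarrow> nat \<Rightarrow> nat" where
  "moves_fun K c = (\<lambda>j. if j \<in> {1..K} then moves c j else 0)"

definition canonical :: "nat \<Rightarrow> nat \<Rightarrow> pstate \<Rightarrow> bool" where
  "canonical K c s \<longleftrightarrow> (case s of (c', ps, mv) \<Rightarrow>
     c' = c \<and> set ps = pebble_at c ` {1..K} \<and> length ps = K \<and> ps \<noteq> []
     \<and> (\<forall>p \<in> set ps. pos_key (hd ps) \<le> pos_key p) \<and> mv = moves_fun K c)"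

text \<open>The initial state is canonical: pebble j starts at 2^j, its first destination.\<close>
lemma canonical_init: "K \<ge> 1 \<Longrightarrow> canonical K 0 (pinit K)"
proof -
  assume K: "K \<ge> 1"
  have m0: "moves 0 j = 0" for j unfolding moves_def by simp
  have pe: "pebble_at 0 j = (j, Some (2 ^ j), Some (2 ^ j))" for j
    unfolding pebble_at_def posn_def dest_def m0 by simp
  let ?ps = "[(j, Some (2 ^ j), Some (2 ^ j)). j \<leftarrow> [1..<K + 1]] :: pebble list"
  have hd: "hd ?ps = (1, Some 2, Some 2)" using K by (simp add: upt_rec)
  have mn: "\<forall>p \<in> set ?ps. pos_key (hd ?ps) \<le> pos_key p"
  proof
    fix p assume "p \<in> set ?ps"
    then obtain j where "j \<ge> 1" "p = (j, Some (2 ^ j), Some (2 ^ j))" by auto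
    moreover from this have "(2::int) ^ 1 \<le> 2 ^ j" by (intro power_increasing) auto
    ultimately show "pos_key (hd ?ps) \<le> pos_key p" unfolding hd pos_key_def by simp
  qed
  have "set ?ps = pebble_at 0 ` {1..K}" unfolding pe by auto
  moreover have "length ?ps = K" "?ps \<noteq> []" using K by auto
  moreover have "(\<lambda>_. 0) = moves_fun K 0" unfolding moves_fun_def m0 by simp
  ultimately show ?thesis unfolding canonical_def pinit_def prod.case using mn by blast
qed

text \<open>In a canonical state, the pebble whose destination is the even step c + 1 or c + 2
  is the first pebble: it sits on its destination, and all others are at or above
  theirs, which are even and larger than c.\<close>
lemma canonical_hd:
  assumes "canonical K c (c, ps, mv)" "i \<in> {1..K}" "dest c i = d"
    and "d = c + 1 \<or> d = c + 2" "even d"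
  shows "hd ps = pebble_at c i"
proof -
  from assms(1) have S: "set ps = pebble_at c ` {1..K}" and "ps \<noteq> []"
    and mn: "\<forall>p \<in> set ps. pos_key (hd ps) \<le> pos_key p" unfolding canonical_def by auto
  then obtain h where h: "h \<in> {1..K}" "hd ps = pebble_at c h" by (metis hd_in_set imageE)
  have "pebble_at c i \<in> set ps" using S assms(2) by auto
  then have "pos_key (pebble_at c h) \<le> pos_key (pebble_at c i)" using mn h by metis
  then have "posn c h \<le> posn c i" by simp
  also have "posn c i = int d" using posn_at_dest[of i c] assms(2-4) by auto
  finally have "dest c h \<le> d" using posn_ge_dest[of c h] by linarith
  moreover have "c < dest c h" by (rule dest_gt)
  moreover have "even (dest c h)" using h by (intro dest_even) auto
  ultimately have "dest c h = d" using assms(4,5) by presburger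
  then have "h = i" using assms(3) dest_inj by metis
  then show ?thesis using h by simp
qed

lemma pstep_odd:
  "c \<noteq> N \<Longrightarrow> odd (c + 1) \<Longrightarrow> pstep N (c, ps, mv) = (c + 1, map advance ps, mv)"
  unfolding pstep_def by (simp add: Let_def)

lemma fst_advance [simp]: "fst (advance p) = fst p"
  unfolding advance_def by (cases p) auto

lemma pstep_even:
  "c \<noteq> N \<Longrightarrow> even (c + 1) \<Longrightarrow>
   pstep N (c, p # rest, mv) = (c + 1, sort_key pos_key (backmove N (advance p) # map advance rest),
                                mv(fst p := mv (fst p) + 1))"
  unfolding pstep_def by (simp add: Let_def)

text \<open>From a canonical state, the move counters after one more step are given by the
  closed form, whether or not the moving pebble gets discarded.\<close>
lemma canonical_moves_step:
  assumes I: "canonical K c (c, ps, mv)" and c: "c + 1 \<le> 2 ^ K"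
  shows "snd (snd (pstep (2 ^ K) (c, ps, mv))) = moves_fun K (c + 1)"
proof -
  have mv: "mv = moves_fun K c" and "ps \<noteq> []" using I unfolding canonical_def by auto
  show ?thesis
  proof (cases "even (c + 1)")
    case True
    obtain i where i: "i \<in> {1..K}" "dest c i = c + 1"
      using dest_hits[of "c + 1" K c] True c by auto
    obtain rest where ps: "ps = pebble_at c i # rest"
      using canonical_hd[OF I i] True \<open>ps \<noteq> []\<close> by (cases ps) auto
    have "mv(i := mv i + 1) = moves_fun K (c + 1)"
    proof
      fix j
      show "(mv(i := mv i + 1)) j = moves_fun K (c + 1) j"
        using i moves_Suc[of c j] dest_inj[of c j i] unfolding mv moves_fun_def
        by (cases "j = i") auto
    qed
    moreover have "snd (snd (pstep (2 ^ K) (c, ps, mv))) = mv(i := mv i + 1)"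
      unfolding ps using pstep_even[of c "2 ^ K" "pebble_at c i" rest mv] True c
      by (simp del: sort_key_simps)
    ultimately show ?thesis by simp
  next
    case False
    have "mv j = moves_fun K (c + 1) j" for j
    proof -
      have "dest c j \<noteq> c + 1" if "j \<in> {1..K}" using dest_even[of j c] that False by fastforce
      then show ?thesis using moves_Suc[of c j] unfolding mv moves_fun_def by auto
    qed
    then show ?thesis using pstep_odd[of c "2 ^ K", OF _ False] c by auto
  qed
qed

lemma inj_pebble_at: "inj (pebble_at c)"
  by (rule injI) (metis fst_pebble_at)

lemma canonical_distinct:
  assumes "canonical K c (c, ps, mv)"
  shows "distinct ps"
proof -
  have "inj_on (pebble_at c) {1..K}" using inj_pebble_at by (rule inj_on_subset) simp
  then have "card (set ps) = length ps"
    using assms unfolding canonical_def by (simp add: card_image)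
  then show ?thesis by (rule card_distinct)
qed

lemma hd_sort_key_min:
  "xs \<noteq> [] \<Longrightarrow> \<forall>p \<in> set (sort_key f xs). f (hd (sort_key f xs)) \<le> f p"
  using sorted_sort_key[of f xs] by (cases "sort_key f xs") auto

text \<open>Invariance at an even step: the first pebble is the one due to move, and as long
  as c + 1 < 2^k its new destination stays within the bound 2^(k+1), so it is not
  discarded; all other pebbles just descend.\<close>
lemma canonical_step_even:
  assumes I: "canonical (k + 1) c (c, ps, mv)" and ev: "even (c + 1)" and c: "c + 1 < 2 ^ k"
  shows "canonical (k + 1) (c + 1) (pstep (2 ^ (k + 1)) (c, ps, mv))"
proof -
  let ?K = "k + 1"
  have cK: "c + 1 \<le> 2 ^ ?K" using c by simp
  obtain i where i: "i \<in> {1..?K}" "dest c i = c + 1" using dest_hits[of "c + 1" ?K c] ev cK by auto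
  have "ps \<noteq> []" using I unfolding canonical_def by simp
  then obtain rest where ps: "ps = pebble_at c i # rest"
    using canonical_hd[OF I i] ev by (cases ps) auto
  let ?new = "sort_key pos_key (pebble_at (c + 1) i # map advance rest)"
  have "(2::nat) ^ i < 2 ^ k" using dest_ge[of i c] i c by linarith
  then have "i < k" by simp
  then have "(2::nat) ^ (i + 1) \<le> 2 ^ k" by (intro power_increasing) auto
  then have "c + 1 + 2 ^ (i + 1) \<le> 2 ^ ?K" using c by simp
  then have moved: "backmove (2 ^ ?K) (advance (pebble_at c i)) = pebble_at (c + 1) i"
    using backmove_pebble_at i by auto
  have "pebble_at c i \<notin> set rest" using canonical_distinct[OF I] unfolding ps by simp
  then have "set rest = set ps - {pebble_at c i}" unfolding ps by auto
  also have "\<dots> = pebble_at c ` ({1..?K} - {i})"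
    using I inj_pebble_at unfolding canonical_def by (simp add: image_set_diff)
  finally have rest: "set rest = pebble_at c ` ({1..?K} - {i})" .
  have adv: "advance (pebble_at c h) = pebble_at (c + 1) h" if h: "h \<in> {1..?K} - {i}" for h
  proof -
    have "dest c h \<noteq> c + 1" using dest_inj[of c h i] h i(2) by auto
    then show ?thesis using advance_pebble_at h by simp
  qed
  have "set (map advance rest) = pebble_at (c + 1) ` ({1..?K} - {i})"
    unfolding set_map rest image_image using adv by (intro image_cong) auto
  then have "insert (pebble_at (c + 1) i) (set (map advance rest)) = pebble_at (c + 1) ` {1..?K}"
    using i(1) by auto
  then have "set ?new = pebble_at (c + 1) ` {1..?K}" by (simp only: set_sort list.set)
  moreover have "length ?new = ?K" using I unfolding canonical_def ps by simp
  moreover have "?new \<noteq> []" by (metis set_sort list.set(2) insert_not_empty set_empty)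
  moreover have "\<forall>p \<in> set ?new. pos_key (hd ?new) \<le> pos_key p"
    by (rule hd_sort_key_min) simp
  moreover have step: "pstep (2 ^ ?K) (c, ps, mv) = (c + 1, ?new, mv(i := mv i + 1))"
    unfolding ps using pstep_even[of c "2 ^ ?K"] ev c moved by (simp del: sort_key_simps)
  moreover have "mv(i := mv i + 1) = moves_fun ?K (c + 1)"
    using canonical_moves_step[OF I cK] unfolding step by simp
  ultimately show ?thesis unfolding canonical_def by simp
qed

text \<open>Invariance at an odd step: no destination is odd, so every pebble just descends;
  the pebble with destination c + 2 then sits there and is the lowest one.\<close>
lemma canonical_step_odd:
  assumes I: "canonical K c (c, ps, mv)" and od: "odd (c + 1)" and c: "c + 2 \<le> 2 ^ K"
  shows "canonical K (c + 1) (pstep (2 ^ K) (c, ps, mv))"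
proof -
  from I have S: "set ps = pebble_at c ` {1..K}" and ne: "ps \<noteq> []"
    unfolding canonical_def by auto
  have adv: "advance (pebble_at c h) = pebble_at (c + 1) h" if "h \<in> {1..K}" for h
  proof -
    have "dest c h \<noteq> c + 1" using dest_even[of h c] that od by fastforce
    then show ?thesis using advance_pebble_at that by simp
  qed
  then have S': "set (map advance ps) = pebble_at (c + 1) ` {1..K}"
    unfolding set_map S image_image by (auto simp: image_iff)
  obtain i where i: "i \<in> {1..K}" "dest c i = c + 2" using dest_hits[of "c + 2" K c] od c by auto
  have "hd (map advance ps) = pebble_at (c + 1) i"
    using canonical_hd[OF I i] od ne adv i(1) by (simp add: hd_map)
  moreover have "dest (c + 1) i = c + 2" using dest_Suc_stay[of c i] i by simp
  then have "posn (c + 1) i = int (c + 2)" using posn_at_dest[of i "c + 1"] i by auto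
  moreover have "int (c + 2) \<le> posn (c + 1) h" if "h \<in> {1..K}" for h
  proof -
    have "c + 1 < dest (c + 1) h" "even (dest (c + 1) h)" using dest_gt dest_even that by auto
    then have "c + 2 \<le> dest (c + 1) h" using od by presburger
    then show ?thesis using posn_ge_dest[of "c + 1" h] by linarith
  qed
  moreover have "snd (snd (pstep (2 ^ K) (c, ps, mv))) = moves_fun K (c + 1)"
    using canonical_moves_step[OF I] c by simp
  moreover have "pstep (2 ^ K) (c, ps, mv) = (c + 1, map advance ps, mv)"
    using pstep_odd od c by simp
  ultimately show ?thesis using S' I ne by (auto simp: canonical_def)
qed

lemma canonical_shape: "canonical K c s \<Longrightarrow> \<exists>ps mv. s = (c, ps, mv)"
  unfolding canonical_def by (auto split: prod.splits)

lemma canonical_iterate: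
  assumes "k \<ge> 1" "c < 2 ^ k"
  shows "canonical (k + 1) c ((pstep (2 ^ (k + 1)) ^^ c) (pinit (k + 1)))"
  using assms(2)
proof (induction c)
  case 0
  then show ?case using canonical_init assms(1) by simp
next
  case (Suc c)
  then have I: "canonical (k + 1) c ((pstep (2 ^ (k + 1)) ^^ c) (pinit (k + 1)))" by simp
  then obtain ps mv where s: "(pstep (2 ^ (k + 1)) ^^ c) (pinit (k + 1)) = (c, ps, mv)"
    using canonical_shape by blast
  have I': "canonical (k + 1) c (c, ps, mv)" using I s by simp
  have step: "(pstep (2 ^ (k + 1)) ^^ Suc c) (pinit (k + 1)) = pstep (2 ^ (k + 1)) (c, ps, mv)"
    using s by simp
  show ?case unfolding step
  proof (cases "even (c + 1)")
    case True
    then show "canonical (k + 1) (Suc c) (pstep (2 ^ (k + 1)) (c, ps, mv))"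
      using canonical_step_even[OF I' True] Suc.prems by simp
  next
    case False
    have "c + 2 \<le> 2 ^ (k + 1)" using Suc.prems by simp
    then show "canonical (k + 1) (Suc c) (pstep (2 ^ (k + 1)) (c, ps, mv))"
      using canonical_step_odd[OF I' False] by simp
  qed
qed

text \<open>After c \<le> 2^k steps with k + 1 pebbles, pebble j has made exactly moves c j
  backward moves.  The last of these steps may discard a pebble, which does not
  affect the counters.\<close>
lemma backward_moves_closed_form:
  assumes "k \<ge> 1" "c \<le> 2 ^ k" "j \<in> {1..k + 1}"
  shows "backward_moves (k + 1) c j = moves c j"
proof (cases c)
  case 0
  then show ?thesis unfolding backward_moves_def pinit_def moves_def by simp
next
  case (Suc c')
  then have I: "canonical (k + 1) c' ((pstep (2 ^ (k + 1)) ^^ c') (pinit (k + 1)))"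
    using canonical_iterate assms by simp
  then obtain ps mv where s: "(pstep (2 ^ (k + 1)) ^^ c') (pinit (k + 1)) = (c', ps, mv)"
    using canonical_shape by blast
  have I': "canonical (k + 1) c' (c', ps, mv)" using I s by simp
  have step: "(pstep (2 ^ (k + 1)) ^^ c) (pinit (k + 1)) = pstep (2 ^ (k + 1)) (c', ps, mv)"
    using s Suc by simp
  have "c' + 1 \<le> 2 ^ (k + 1)" using Suc assms(2) by simp
  then show ?thesis
    using canonical_moves_step[OF I'] assms(3) Suc
    unfolding backward_moves_def moves_fun_def step by simp
qed

theorem fact7:
  fixes k j :: nat
  assumes "k \<ge> 1" and "1 \<le> j" and "j < k"
  shows "backward_moves (k + 1) (2 ^ k) j = 2 ^ (k - j - 1)"
proof -
  have "backward_moves (k + 1) (2 ^ k) j = moves (2 ^ k) j"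
    using backward_moves_closed_form assms by simp
  also have "\<dots> = 2 ^ (k - j - 1)"
    using moves_pow2 assms(3) .
  finally show ?thesis .
qed

end
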